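(* Consider CRANE run for $K$ iterations with $\beta=c\log(\mathcal{N}_{\mathcal{F}}(\epsilon_{\mathrm b})KH|\mathcal{U}_A|/\delta)$, $\epsilon_{\mathrm b}=1/(KH|\mathcal{U}_A|)$, $\delta\in(0,1]$ and $c$ a suitable absolute constant, on a model class $\mathcal{F}$ containing the true model $f^*$. Then with probability at least $1-\delta/2$, $f^*\in\mathcal{B}^k$ for all $k\in[K]$.
   Context: Process: finite observation space $\mathcal{O}$, finite action space $\mathcal{A}$, horizon $H$; histories $\tau_h=(o_1,a_1,\dots,o_h,a_h)$; policies pick $a_h\sim\pi_h(\cdot\mid\tau_{h-1},o_h)$; reward $r_h(o_h,a_h)$; $V^\pi_f$ is the expected total reward of $\pi$ in model $f$ and $\mathbb{P}^\pi_f(\tau_H)$ the probability of $\tau_H$ under $\pi$ in $f$. $\mathcal{U}_h$ ($h\in[H]$) are given sets of tests (sequences of future observations and actions starting at step $h$) and $\mathcal{U}_{A,h}$ is the set of action sequences occurring in $\mathcal{U}_h$, $|\mathcal{U}_A|=\max_h|\mathcal{U}_{A,h}|$. $\mathcal{F}$ is a class of models (each giving valid trajectory distributions $\mathbb{P}^\pi_f$ for every $\pi$). Bracket number: a size-$N$ $\epsilon$-bracket of $\mathcal{F}$ is $\{(g_1^i,g_2^i)\}_{i=1}^N$ of functions of (policy, trajectory $\tau_H$) with $\sum_{\tau_H}|g_1^i(\pi,\tau_H)-g_2^i(\pi,\tau_H)|\le\epsilon$ for all $\pi,i$, such that each $f\in\mathcal{F}$ has some $i$ with $g_1^i(\pi,\tau_H)\le\mathbb{P}^\pi_f(\tau_H)\le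 g_2^i(\pi,\tau_H)$ for all $\tau_H,\pi$; $\mathcal{N}_{\mathcal{F}}(\epsilon)$ is the minimal $N$. Algorithm CRANE (input $\beta$): $\mathcal{B}^1=\mathcal{F}$, $\mathcal{D}=\emptyset$. For $k=1,\dots,K$: choose $(f^k,\pi^k)\in\arg\max_{f\in\mathcal{B}^k,\pi}V^\pi_f$; for each $h\in\{0,\dots,H-1\}$ and $u_a\in\mathcal{U}_{A,h+1}$, execute the policy that follows $\pi^k$ at steps $1,\dots,h-1$, a uniformly random action at step $h$ (if $h\ge1$), the actions of $u_a$ from step $h+1$, and uniform actions afterwards, adding (this policy, collected $\tau_H$) to $\mathcal{D}$; then $\mathcal{B}^{k+1}=\{f\in\mathcal{F}:\sum_{(\pi,\tau_H)\in\mathcal{D}}\log\mathbb{P}^\pi_f(\tau_H)\ge\max_{f'\in\mathcal{F}}\sum_{(\pi,\tau_H)\in\mathcal{D}}\log\mathbb{P}^\pi_{f'}(\tau_H)-\beta\}$. *)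

theory Defs
  imports "HOL-Probability.Probability" "HOL-Library.List_Lexorder"
begin

text \<open>Observations and actions are encoded as natural numbers; the finite observation
space and action space are explicit finite carrier sets Obs and Act (so that the
absolute constant c can be quantified independently of them).\<close>

type_synonym hist = "(nat \<times> nat) list"
type_synonym policy = "hist \<Rightarrow> nat \<Rightarrow> nat pmf"   \<comment> \<open>pi(tau_{h-1}, o_h), step h = length history + 1\<close>
type_synonym model = "hist \<Rightarrow> nat pmf"             \<comment> \<open>law of o_h given tau_{h-1}\<close>
type_synonym dataset = "(policy \<times> hist) list"

definition valid_policy :: "nat set \<Rightarrow> policy \<Rightarrow> bool" where
  "valid_policy Act \<pi> \<longleftrightarrow> (\<forall>hs ob. set_pmf (\<pi> hs ob) \<subseteq> Act)"

definition valid_model :: "nat set \<Rightarrow> model \<Rightarrow> bool" where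
  "valid_model Obs f \<longleftrightarrow> (\<forall>hs. set_pmf (f hs) \<subseteq> Obs)"

fun traj :: "model \<Rightarrow> policy \<Rightarrow> nat \<Rightarrow> hist pmf" where
  "traj f \<pi> 0 = return_pmf []"
| "traj f \<pi> (Suc n) = traj f \<pi> n \<bind> (\<lambda>hs. f hs \<bind> (\<lambda>ob. \<pi> hs ob \<bind> (\<lambda>a. return_pmf (hs @ [(ob, a)]))))"

definition Pr :: "nat \<Rightarrow> model \<Rightarrow> policy \<Rightarrow> hist \<Rightarrow> real" where
  "Pr H f \<pi> \<tau> = pmf (traj f \<pi> H) \<tau>"

definition Val :: "nat \<Rightarrow> (nat \<Rightarrow> nat \<Rightarrow> nat \<Rightarrow> real) \<Rightarrow> model \<Rightarrow> policy \<Rightarrow> real" where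
  "Val H r f \<pi> = measure_pmf.expectation (traj f \<pi> H)
      (\<lambda>\<tau>. \<Sum>h<length \<tau>. r (Suc h) (fst (\<tau> ! h)) (snd (\<tau> ! h)))"

definition trajs :: "nat set \<Rightarrow> nat set \<Rightarrow> nat \<Rightarrow> hist set" where
  "trajs Obs Act H = {\<tau>. length \<tau> = H \<and> set \<tau> \<subseteq> Obs \<times> Act}"

definition has_bracket ::
  "nat set \<Rightarrow> nat set \<Rightarrow> nat \<Rightarrow> model set \<Rightarrow> real \<Rightarrow> nat \<Rightarrow> bool" where
  "has_bracket Obs Act H F \<epsilon> N \<longleftrightarrow>
    (\<exists>g1 g2 :: nat \<Rightarrow> policy \<Rightarrow> hist \<Rightarrow> real.
       (\<forall>i<N. \<forall>\<pi>. valid_policy Act \<pi> \<longrightarrow>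
           (\<Sum>\<tau>\<in>trajs Obs Act H. \<bar>g1 i \<pi> \<tau> - g2 i \<pi> \<tau>\<bar>) \<le> \<epsilon>) \<and>
       (\<forall>f\<in>F. \<exists>i<N. \<forall>\<pi> \<tau>. valid_policy Act \<pi> \<longrightarrow> \<tau> \<in> trajs Obs Act H \<longrightarrow>
           g1 i \<pi> \<tau> \<le> Pr H f \<pi> \<tau> \<and> Pr H f \<pi> \<tau> \<le> g2 i \<pi> \<tau>))"

definition bracket_num :: "nat set \<Rightarrow> nat set \<Rightarrow> nat \<Rightarrow> model set \<Rightarrow> real \<Rightarrow> nat" where
  "bracket_num Obs Act H F \<epsilon> = (LEAST N. has_bracket Obs Act H F \<epsilon> N)"

definition eln :: "real \<Rightarrow> ereal" where
  "eln x = (if x > 0 then ereal (ln x) else - \<infinity>)"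

definition loglik :: "nat \<Rightarrow> model \<Rightarrow> dataset \<Rightarrow> ereal" where
  "loglik H f D = sum_list (map (\<lambda>(\<pi>, \<tau>). eln (Pr H f \<pi> \<tau>)) D)"

text \<open>Confidence set B built from data D (the max over F is written as a supremum).\<close>
definition conf_set :: "nat \<Rightarrow> model set \<Rightarrow> real \<Rightarrow> dataset \<Rightarrow> model set" where
  "conf_set H F \<beta> D =
     {f \<in> F. loglik H f D \<ge> (SUP f'\<in>F. loglik H f' D) - ereal \<beta>}"

text \<open>Exploration policy: follow pi at steps 1..h-1, uniform action at step h (if h>=1),
the actions of u from step h+1 on, uniform afterwards.\<close>
definition explore :: "nat set \<Rightarrow> policy \<Rightarrow> nat \<Rightarrow> nat list \<Rightarrow> policy" where
  "explore Act \<pi> h u hs ob =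
     (let t = Suc (length hs) in
      if t < h then \<pi> hs ob
      else if t = h then pmf_of_set Act
      else if t - Suc h < length u then return_pmf (u ! (t - Suc h))
      else pmf_of_set Act)"

definition explore_pols ::
  "nat set \<Rightarrow> (nat \<Rightarrow> nat list set) \<Rightarrow> nat \<Rightarrow> policy \<Rightarrow> policy list" where
  "explore_pols Act UA H \<pi> =
     concat (map (\<lambda>h. map (\<lambda>u. explore Act \<pi> h u) (sorted_list_of_set (UA (Suc h)))) [0..<H])"

primrec collect :: "model \<Rightarrow> nat \<Rightarrow> policy list \<Rightarrow> dataset pmf" where
  "collect f H [] = return_pmf []"
| "collect f H (p # ps) =
     traj f p H \<bind> (\<lambda>\<tau>. collect f H ps \<bind> (\<lambda>rest. return_pmf ((p, \<tau>) # rest)))"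

text \<open>Run of CRANE for k iterations in the true model fstar; sel D is the chosen
(f^k, pi^k) given the current data D.  The result is the list [D_0, ..., D_k]
of the data sets after each iteration (D_0 = empty), so B^k = conf_set (D_{k-1}).\<close>
fun crane_run ::
  "nat set \<Rightarrow> (nat \<Rightarrow> nat list set) \<Rightarrow> nat \<Rightarrow> model \<Rightarrow> (dataset \<Rightarrow> model \<times> policy)
     \<Rightarrow> nat \<Rightarrow> dataset list pmf" where
  "crane_run Act UA H fstar sel 0 = return_pmf [[]]"
| "crane_run Act UA H fstar sel (Suc k) =
     crane_run Act UA H fstar sel k \<bind> (\<lambda>Ds.
       collect fstar H (explore_pols Act UA H (snd (sel (last Ds)))) \<bind>
         (\<lambda>new. return_pmf (Ds @ [last Ds @ new])))"

definition UA_size :: "(nat \<Rightarrow> nat list set) \<Rightarrow> nat \<Rightarrow> nat" where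
  "UA_size UA H = Max (insert 0 ((\<lambda>h. card (UA h)) ` {1..H}))"

end

theory Submission
  imports Defs
begin

text \<open>Replace every bracket by its upper function \<open>G\<^sub>i\<close>. Under the true model \<open>f\<^sup>*\<close> each
collected sample multiplies the likelihood ratio \<open>\<Prod> G\<^sub>i / P\<^sub>f\<^sub>*\<close> by a factor of mean at most
\<open>1 + \<epsilon>\<^sub>b\<close>, so after fewer than \<open>K\<close> iterations (at most \<open>K H |U\<^sub>A|\<close> samples) its expectation
is at most \<open>e\<close>. If \<open>f\<^sup>*\<close> drops out of the confidence set, some \<open>f \<in> F\<close> has likelihood above
\<open>e\<^sup>\<beta>\<close> times that of \<open>f\<^sup>*\<close>, and then so has the upper function of the bracket of \<open>f\<close>.
Markov's inequality and union bounds over the \<open>N\<close> brackets and the \<open>K\<close> iterations bound the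
failure probability by \<open>K N e / e\<^sup>\<beta>\<close>, which is at most \<open>\<delta>/2\<close> for
\<open>\<beta> = 4 ln (N K H |U\<^sub>A| / \<delta>)\<close>.\<close>

lemma prod_list_mono:
  fixes f g :: "'a \<Rightarrow> 'b::linordered_semidom"
  assumes "\<And>x. x \<in> set xs \<Longrightarrow> 0 \<le> f x \<and> f x \<le> g x"
  shows "(\<Prod>x\<leftarrow>xs. f x) \<le> (\<Prod>x\<leftarrow>xs. g x)"
  using assms by (induction xs) (auto 4 3 intro!: mult_mono prod_list_nonneg intro: order_trans)

lemma prod_list_pos:
  fixes f :: "'a \<Rightarrow> 'b::linordered_semidom"
  shows "(\<And>x. x \<in> set xs \<Longrightarrow> 0 < f x) \<Longrightarrow> 0 < (\<Prod>x\<leftarrow>xs. f x)"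
  by (induction xs) auto

lemma prod_list_divide:
  fixes f g :: "'a \<Rightarrow> 'b::field"
  shows "(\<Prod>x\<leftarrow>xs. f x / g x) = (\<Prod>x\<leftarrow>xs. f x) / (\<Prod>x\<leftarrow>xs. g x)"
  by (induction xs) auto

lemma ennreal_prod_list:
  "(\<And>x. x \<in> set xs \<Longrightarrow> 0 \<le> f x) \<Longrightarrow> ennreal (\<Prod>x\<leftarrow>xs. f x) = (\<Prod>x\<leftarrow>xs. ennreal (f x))"
  by (induction xs) (auto simp: ennreal_mult')

lemma one_plus_inverse_power_le_exp:
  assumes "n \<le> M"
  shows "(1 + 1 / real M) ^ n \<le> exp 1"
proof -
  have "(1 + 1 / real M) ^ n \<le> exp (1 / real M) ^ n"
    by (intro power_mono) auto
  also have "\<dots> = exp (real n / real M)"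
    by (simp add: exp_of_nat_mult[symmetric])
  also have "\<dots> \<le> exp 1"
    using assms by (cases "M = 0") auto
  finally show ?thesis .
qed

lemma ln_of_nat_div_nonneg:
  assumes "0 < \<delta>" "\<delta> \<le> 1"
  shows "0 \<le> ln (real n / \<delta>)"
proof (cases "n = 0")
  case False
  then have "1 \<le> real n"
    by simp
  also have "\<dots> \<le> real n / \<delta>"
    using assms by (simp add: le_divide_eq mult_left_le)
  finally show ?thesis
    by simp
qed simp

lemma sum_pmf_le_1: "(\<Sum>x\<in>S. pmf p x) \<le> 1"
proof (cases "finite S")
  case True
  then show ?thesis
    using measure_pmf.prob_le_1[of p S] by (simp add: measure_measure_pmf_finite)
qed simp

lemma nn_integral_pmf_ratio_le:
  assumes S: "finite S" "set_pmf p \<subseteq> S" and g: "\<And>x. x \<in> S \<Longrightarrow> 0 \<le> g x"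
  shows "(\<integral>\<^sup>+x. ennreal (g x / pmf p x) \<partial>measure_pmf p) \<le> ennreal (\<Sum>x\<in>S. g x)"
proof -
  have "(\<integral>\<^sup>+x. ennreal (g x / pmf p x) \<partial>measure_pmf p)
      = (\<Sum>x\<in>S. ennreal (g x / pmf p x) * pmf p x)"
    using S by (intro nn_integral_measure_pmf_support) auto
  also have "\<dots> = (\<Sum>x\<in>S. ennreal (g x / pmf p x * pmf p x))"
    using g by (intro sum.cong refl) (simp flip: ennreal_mult'')
  also have "\<dots> \<le> (\<Sum>x\<in>S. ennreal (g x))"
    using g by (intro sum_mono ennreal_leI) (cases "pmf p x = 0"; simp)
  also have "\<dots> = ennreal (\<Sum>x\<in>S. g x)"
    using g by simp
  finally show ?thesis .
qed

lemma prob_Markov_pmf: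
  fixes u :: "'a \<Rightarrow> ennreal"
  assumes "(\<integral>\<^sup>+x. u x \<partial>measure_pmf M) \<le> ennreal B" "0 < t" "0 \<le> B"
  shows "measure_pmf.prob M {x. ennreal t \<le> u x} \<le> B / t"
proof -
  let ?S = "{x. ennreal t \<le> u x}"
  have "ennreal t * emeasure (measure_pmf M) ?S = (\<integral>\<^sup>+x. ennreal t * indicator ?S x \<partial>measure_pmf M)"
    by (simp add: nn_integral_cmult_indicator)
  also have "\<dots> \<le> (\<integral>\<^sup>+x. u x \<partial>measure_pmf M)"
    by (intro nn_integral_mono) (auto split: split_indicator)
  also have "\<dots> \<le> ennreal B"
    by fact
  finally have "t * measure_pmf.prob M ?S \<le> B"
    using assms(2,3) by (simp add: measure_pmf.emeasure_eq_measure flip: ennreal_mult)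
  then show ?thesis
    using assms(2) by (simp add: field_simps)
qed

lemma prob_all_ge_union_bound:
  assumes "finite A" "\<And>k. k \<in> A \<Longrightarrow> measure_pmf.prob M {x. \<not> P k x} \<le> e"
  shows "1 - real (card A) * e \<le> measure_pmf.prob M {x. \<forall>k\<in>A. P k x}"
proof -
  have "measure_pmf.prob M (\<Union>k\<in>A. {x. \<not> P k x}) \<le> (\<Sum>k\<in>A. measure_pmf.prob M {x. \<not> P k x})"
    using assms(1) by (intro measure_pmf.finite_measure_subadditive_finite) auto
  also have "\<dots> \<le> real (card A) * e"
    using assms(2) by (rule sum_bounded_above)
  finally have union: "measure_pmf.prob M (\<Union>k\<in>A. {x. \<not> P k x}) \<le> real (card A) * e" .
  have "{x. \<forall>k\<in>A. P k x} = space (measure_pmf M) - (\<Union>k\<in>A. {x. \<not> P k x})"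
    by auto
  then have "measure_pmf.prob M {x. \<forall>k\<in>A. P k x} = 1 - measure_pmf.prob M (\<Union>k\<in>A. {x. \<not> P k x})"
    by (simp only:) (rule measure_pmf.prob_compl, simp)
  with union show ?thesis
    by linarith
qed

lemma set_pmf_traj:
  assumes "valid_model Obs f" "valid_policy Act \<pi>"
  shows "set_pmf (traj f \<pi> n) \<subseteq> trajs Obs Act n"
proof
  fix \<tau> assume "\<tau> \<in> set_pmf (traj f \<pi> n)"
  then show "\<tau> \<in> trajs Obs Act n"
  proof (induction n arbitrary: \<tau>)
    case 0
    then show ?case by (simp add: trajs_def)
  next
    case (Suc n)
    then show ?case
      using assms unfolding valid_model_def valid_policy_def trajs_def by fastforce
  qed
qed

lemma finite_trajs: "finite Obs \<Longrightarrow> finite Act \<Longrightarrow> finite (trajs Obs Act H)"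
  unfolding trajs_def using finite_lists_length_eq[of "Obs \<times> Act" H] by (simp add: conj_commute)

lemma sum_upper_le_of_bracket:
  fixes l p u :: "'a \<Rightarrow> real"
  assumes "\<And>x. x \<in> S \<Longrightarrow> l x \<le> p x \<and> p x \<le> u x"
  shows "(\<Sum>x\<in>S. u x) \<le> (\<Sum>x\<in>S. p x) + (\<Sum>x\<in>S. \<bar>l x - u x\<bar>)"
  unfolding sum.distrib[symmetric] by (intro sum_mono) (smt (verit) assms)

definition upper_envelope ::
  "nat set \<Rightarrow> nat set \<Rightarrow> nat \<Rightarrow> model set \<Rightarrow> real \<Rightarrow> nat \<Rightarrow> (nat \<Rightarrow> policy \<Rightarrow> hist \<Rightarrow> real) \<Rightarrow> bool"
where
  "upper_envelope Obs Act H F \<epsilon> N G \<longleftrightarrow>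
    (\<forall>i<N. \<forall>\<pi>. valid_policy Act \<pi> \<longrightarrow>
       (\<forall>\<tau>\<in>trajs Obs Act H. 0 \<le> G i \<pi> \<tau>) \<and> (\<Sum>\<tau>\<in>trajs Obs Act H. G i \<pi> \<tau>) \<le> 1 + \<epsilon>) \<and>
    (\<forall>f\<in>F. \<exists>i<N. \<forall>\<pi>. valid_policy Act \<pi> \<longrightarrow> (\<forall>\<tau>\<in>trajs Obs Act H. Pr H f \<pi> \<tau> \<le> G i \<pi> \<tau>))"

text \<open>Brackets containing no model of \<open>F\<close> may have negative upper functions; these are
replaced by \<open>0\<close>.\<close>

lemma has_bracket_imp_upper_envelope:
  assumes "has_bracket Obs Act H F \<epsilon> N"
  shows "\<exists>G. upper_envelope Obs Act H F \<epsilon> N G"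
proof -
  obtain g1 g2 :: "nat \<Rightarrow> policy \<Rightarrow> hist \<Rightarrow> real" where
    width: "\<forall>i<N. \<forall>\<pi>. valid_policy Act \<pi> \<longrightarrow> (\<Sum>\<tau>\<in>trajs Obs Act H. \<bar>g1 i \<pi> \<tau> - g2 i \<pi> \<tau>\<bar>) \<le> \<epsilon>"
    and cover: "\<forall>f\<in>F. \<exists>i<N. \<forall>\<pi> \<tau>. valid_policy Act \<pi> \<longrightarrow> \<tau> \<in> trajs Obs Act H \<longrightarrow>
                  g1 i \<pi> \<tau> \<le> Pr H f \<pi> \<tau> \<and> Pr H f \<pi> \<tau> \<le> g2 i \<pi> \<tau>"
    using assms unfolding has_bracket_def by blast
  define brackets where "brackets i f \<longleftrightarrow> (\<forall>\<pi> \<tau>. valid_policy Act \<pi> \<longrightarrow> \<tau> \<in> trajs Obs Act H \<longrightarrow>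
      g1 i \<pi> \<tau> \<le> Pr H f \<pi> \<tau> \<and> Pr H f \<pi> \<tau> \<le> g2 i \<pi> \<tau>)" for i f
  define G where "G i = (if \<exists>f\<in>F. brackets i f then g2 i else (\<lambda>_ _. 0))" for i
  have G_mass: "(\<forall>\<tau>\<in>trajs Obs Act H. 0 \<le> G i \<pi> \<tau>) \<and> (\<Sum>\<tau>\<in>trajs Obs Act H. G i \<pi> \<tau>) \<le> 1 + \<epsilon>"
    if i: "i < N" and \<pi>: "valid_policy Act \<pi>" for i \<pi>
  proof (cases "\<exists>f\<in>F. brackets i f")
    case True
    then obtain f where f: "\<And>\<tau>. \<tau> \<in> trajs Obs Act H \<Longrightarrow> g1 i \<pi> \<tau> \<le> Pr H f \<pi> \<tau> \<and> Pr H f \<pi> \<tau> \<le> g2 i \<pi> \<tau>"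
      using \<pi> unfolding brackets_def by blast
    have "(\<Sum>\<tau>\<in>trajs Obs Act H. g2 i \<pi> \<tau>)
        \<le> (\<Sum>\<tau>\<in>trajs Obs Act H. Pr H f \<pi> \<tau>) + (\<Sum>\<tau>\<in>trajs Obs Act H. \<bar>g1 i \<pi> \<tau> - g2 i \<pi> \<tau>\<bar>)"
      using f by (rule sum_upper_le_of_bracket)
    also have "\<dots> \<le> 1 + \<epsilon>"
      using width i \<pi> sum_pmf_le_1 unfolding Pr_def by (intro add_mono) auto
    finally have "(\<Sum>\<tau>\<in>trajs Obs Act H. g2 i \<pi> \<tau>) \<le> 1 + \<epsilon>" .
    moreover have "0 \<le> g2 i \<pi> \<tau>" if "\<tau> \<in> trajs Obs Act H" for \<tau>
      using f[OF that] pmf_nonneg[of "traj f \<pi> H" \<tau>] unfolding Pr_def by linarith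
    ultimately show ?thesis
      using True by (simp add: G_def)
  next
    case False
    have "0 \<le> (\<Sum>\<tau>\<in>trajs Obs Act H. \<bar>g1 i \<pi> \<tau> - g2 i \<pi> \<tau>\<bar>)"
      by (rule sum_nonneg) simp
    also have "\<dots> \<le> \<epsilon>"
      using width i \<pi> by blast
    finally have "0 \<le> \<epsilon>" .
    then show ?thesis
      using False by (simp add: G_def)
  qed
  have G_cover: "\<exists>i<N. \<forall>\<pi>. valid_policy Act \<pi> \<longrightarrow> (\<forall>\<tau>\<in>trajs Obs Act H. Pr H f \<pi> \<tau> \<le> G i \<pi> \<tau>)"
    if f: "f \<in> F" for f
  proof -
    obtain i where "i < N" "brackets i f"
      using cover f unfolding brackets_def by blast
    moreover have "G i = g2 i"
      using calculation(2) f unfolding G_def by auto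
    ultimately show ?thesis
      unfolding brackets_def by auto
  qed
  have "upper_envelope Obs Act H F \<epsilon> N G"
    unfolding upper_envelope_def using G_mass G_cover by blast
  then show ?thesis
    by blast
qed

definition explore_count :: "(nat \<Rightarrow> nat list set) \<Rightarrow> nat \<Rightarrow> nat" where
  "explore_count UA H = (\<Sum>h<H. card (UA (Suc h)))"

lemma length_explore_pols: "length (explore_pols Act UA H \<pi>) = explore_count UA H"
  by (simp add: explore_pols_def explore_count_def length_concat o_def sum_list_distinct_conv_sum_set
      atLeast0LessThan)

lemma explore_count_le: "explore_count UA H \<le> H * UA_size UA H"
proof -
  have "card (UA (Suc h)) \<le> UA_size UA H" if "h < H" for h
    unfolding UA_size_def using that by (intro Max_ge) auto
  then show ?thesis
    unfolding explore_count_def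
    using sum_bounded_above[of "{..<H}" "\<lambda>h. card (UA (Suc h))" "UA_size UA H"] by simp
qed

lemma valid_policy_explore:
  assumes "valid_policy Act \<pi>" "finite Act" "Act \<noteq> {}" "set u \<subseteq> Act"
  shows "valid_policy Act (explore Act \<pi> h u)"
  using assms unfolding valid_policy_def explore_def Let_def
  by (auto simp: set_pmf_of_set; meson nth_mem subsetD)

lemma valid_policy_explore_pols:
  assumes "valid_policy Act \<pi>" "finite Act" "Act \<noteq> {}" "\<forall>h. finite (UA h) \<and> (\<forall>u\<in>UA h. set u \<subseteq> Act)"
    and "p \<in> set (explore_pols Act UA H \<pi>)"
  shows "valid_policy Act p"
  using assms unfolding explore_pols_def by (auto intro!: valid_policy_explore)

lemma collect_support:
  "D \<in> set_pmf (collect f H ps) \<Longrightarrow> map fst D = ps \<and> (\<forall>(\<pi>, \<tau>)\<in>set D. \<tau> \<in> set_pmf (traj f \<pi> H))"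
  by (induction ps arbitrary: D) fastforce+

lemma nn_integral_collect_le:
  fixes w :: "policy \<Rightarrow> hist \<Rightarrow> ennreal"
  assumes "\<And>p. p \<in> set ps \<Longrightarrow> (\<integral>\<^sup>+\<tau>. w p \<tau> \<partial>measure_pmf (traj f p H)) \<le> B"
  shows "(\<integral>\<^sup>+D. (\<Prod>(p, \<tau>)\<leftarrow>D. w p \<tau>) \<partial>measure_pmf (collect f H ps)) \<le> B ^ length ps"
  using assms
proof (induction ps)
  case Nil
  then show ?case by simp
next
  case (Cons p ps)
  let ?W = "\<lambda>D. \<Prod>(p, \<tau>)\<leftarrow>D. w p \<tau>"
  have "(\<integral>\<^sup>+D. ?W D \<partial>measure_pmf (collect f H (p # ps)))
      = (\<integral>\<^sup>+\<tau>. w p \<tau> * (\<integral>\<^sup>+D. ?W D \<partial>measure_pmf (collect f H ps)) \<partial>measure_pmf (traj f p H))"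
    by (simp add: nn_integral_cmult)
  also have "\<dots> \<le> (\<integral>\<^sup>+\<tau>. w p \<tau> * B ^ length ps \<partial>measure_pmf (traj f p H))"
    using Cons by (intro nn_integral_mono mult_left_mono) auto
  also have "\<dots> = (\<integral>\<^sup>+\<tau>. w p \<tau> \<partial>measure_pmf (traj f p H)) * B ^ length ps"
    by (simp add: nn_integral_multc)
  also have "\<dots> \<le> B * B ^ length ps"
    using Cons by (intro mult_right_mono) auto
  finally show ?case by simp
qed

lemma crane_run_support:
  assumes sel: "\<forall>D. valid_policy Act (snd (sel D))" and Act: "finite Act" "Act \<noteq> {}"
    and UA: "\<forall>h. finite (UA h) \<and> (\<forall>u\<in>UA h. set u \<subseteq> Act)"
    and "Ds \<in> set_pmf (crane_run Act UA H fstar sel j)"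
  shows "length (last Ds) = j * explore_count UA H \<and>
    (\<forall>(\<pi>, \<tau>)\<in>set (last Ds). valid_policy Act \<pi> \<and> \<tau> \<in> set_pmf (traj fstar \<pi> H))"
  using assms(5)
proof (induction j arbitrary: Ds)
  case 0
  then show ?case by simp
next
  case (Suc j)
  from Suc.prems obtain Ds0 new where Ds0: "Ds0 \<in> set_pmf (crane_run Act UA H fstar sel j)"
    and new: "new \<in> set_pmf (collect fstar H (explore_pols Act UA H (snd (sel (last Ds0)))))"
    and Ds: "Ds = Ds0 @ [last Ds0 @ new]"
    by auto
  have "length new = explore_count UA H"
    using collect_support[OF new] length_explore_pols by (metis length_map)
  moreover have "valid_policy Act \<pi> \<and> \<tau> \<in> set_pmf (traj fstar \<pi> H)" if "(\<pi>, \<tau>) \<in> set new" for \<pi> \<tau>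
  proof -
    have "\<pi> \<in> set (map fst new)"
      using that by force
    then have "\<pi> \<in> set (explore_pols Act UA H (snd (sel (last Ds0))))"
      using collect_support[OF new] by simp
    then show ?thesis
      using collect_support[OF new] valid_policy_explore_pols[OF spec[OF sel] Act UA] that by blast
  qed
  ultimately show ?case
    using Suc.IH[OF Ds0] Ds by auto
qed

lemma nn_integral_crane_run_le:
  fixes w :: "policy \<Rightarrow> hist \<Rightarrow> ennreal"
  assumes sel: "\<forall>D. valid_policy Act (snd (sel D))" and Act: "finite Act" "Act \<noteq> {}"
    and UA: "\<forall>h. finite (UA h) \<and> (\<forall>u\<in>UA h. set u \<subseteq> Act)"
    and w: "\<And>p. valid_policy Act p \<Longrightarrow> (\<integral>\<^sup>+\<tau>. w p \<tau> \<partial>measure_pmf (traj fstar p H)) \<le> B"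
  shows "(\<integral>\<^sup>+Ds. (\<Prod>(p, \<tau>)\<leftarrow>last Ds. w p \<tau>) \<partial>measure_pmf (crane_run Act UA H fstar sel j))
           \<le> B ^ (j * explore_count UA H)"
proof (induction j)
  case 0
  then show ?case by simp
next
  case (Suc j)
  let ?W = "\<lambda>D. \<Prod>(p, \<tau>)\<leftarrow>D. w p \<tau>"
  let ?m = "explore_count UA H"
  have new: "(\<integral>\<^sup>+D. ?W D \<partial>measure_pmf (collect fstar H (explore_pols Act UA H (snd (sel D0))))) \<le> B ^ ?m"
    for D0
  proof -
    have "(\<integral>\<^sup>+D. ?W D \<partial>measure_pmf (collect fstar H (explore_pols Act UA H (snd (sel D0)))))
        \<le> B ^ length (explore_pols Act UA H (snd (sel D0)))"
      by (rule nn_integral_collect_le) (rule w[OF valid_policy_explore_pols[OF spec[OF sel] Act UA]])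
    then show ?thesis
      by (simp only: length_explore_pols)
  qed
  have "(\<integral>\<^sup>+Ds. ?W (last Ds) \<partial>measure_pmf (crane_run Act UA H fstar sel (Suc j)))
     = (\<integral>\<^sup>+Ds. ?W (last Ds) *
          (\<integral>\<^sup>+D. ?W D \<partial>measure_pmf (collect fstar H (explore_pols Act UA H (snd (sel (last Ds))))))
        \<partial>measure_pmf (crane_run Act UA H fstar sel j))"
    by (simp add: nn_integral_cmult)
  also have "\<dots> \<le> (\<integral>\<^sup>+Ds. ?W (last Ds) * B ^ ?m \<partial>measure_pmf (crane_run Act UA H fstar sel j))"
    using new by (intro nn_integral_mono mult_left_mono) auto
  also have "\<dots> = (\<integral>\<^sup>+Ds. ?W (last Ds) \<partial>measure_pmf (crane_run Act UA H fstar sel j)) * B ^ ?m"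
    by (simp add: nn_integral_multc)
  also have "\<dots> \<le> B ^ (j * ?m) * B ^ ?m"
    using Suc by (intro mult_right_mono) auto
  finally show ?case
    by (simp add: power_add mult.commute)
qed

lemma length_crane_run:
  "Ds \<in> set_pmf (crane_run Act UA H fstar sel j) \<Longrightarrow> length Ds = Suc j"
  by (induction j arbitrary: Ds) auto

lemma map_pmf_nth_crane_run:
  "j \<le> K \<Longrightarrow>
    map_pmf (\<lambda>Ds. Ds ! j) (crane_run Act UA H fstar sel K) = map_pmf last (crane_run Act UA H fstar sel j)"
proof (induction K)
  case 0
  then show ?case by simp
next
  case (Suc K)
  show ?case
  proof (cases "j = Suc K")
    case True
    show ?thesis
      unfolding True by (intro map_pmf_cong refl) (auto simp: nth_append dest!: length_crane_run)
  next
    case False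
    then have j: "j \<le> K"
      using Suc.prems by simp
    have "map_pmf (\<lambda>Ds. Ds ! j) (crane_run Act UA H fstar sel (Suc K))
        = map_pmf (\<lambda>Ds. Ds ! j) (crane_run Act UA H fstar sel K)"
    proof -
      have "map_pmf (\<lambda>Ds. Ds ! j) (crane_run Act UA H fstar sel (Suc K))
          = crane_run Act UA H fstar sel K \<bind> (\<lambda>Ds. return_pmf (Ds ! j))"
        unfolding crane_run.simps map_bind_pmf using j
        by (intro bind_pmf_cong refl) (auto simp: map_bind_pmf nth_append bind_pmf_const dest!: length_crane_run)
      then show ?thesis
        by (simp add: map_pmf_def)
    qed
    then show ?thesis
      using Suc.IH[OF j] by simp
  qed
qed

lemma prob_crane_run_nth:
  assumes "j \<le> K"
  shows "measure_pmf.prob (crane_run Act UA H fstar sel K) {Ds. P (Ds ! j)}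
       = measure_pmf.prob (crane_run Act UA H fstar sel j) {Ds. P (last Ds)}"
proof -
  have "measure_pmf.prob (map_pmf (\<lambda>Ds. Ds ! j) (crane_run Act UA H fstar sel K)) {D. P D}
      = measure_pmf.prob (map_pmf last (crane_run Act UA H fstar sel j)) {D. P D}"
    by (simp only: map_pmf_nth_crane_run[OF assms])
  then show ?thesis
    by (simp add: vimage_def)
qed

definition lik :: "nat \<Rightarrow> model \<Rightarrow> dataset \<Rightarrow> real" where
  "lik H f D = (\<Prod>(\<pi>, \<tau>)\<leftarrow>D. Pr H f \<pi> \<tau>)"

lemma eln_mult: "0 \<le> x \<Longrightarrow> 0 \<le> y \<Longrightarrow> eln (x * y) = eln x + eln y"
  by (auto simp: eln_def ln_mult zero_less_mult_iff)

lemma lik_nonneg: "0 \<le> lik H f D"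
  unfolding lik_def by (rule prod_list_nonneg) (auto simp: Pr_def)

lemma loglik_eq_eln_lik: "loglik H f D = eln (lik H f D)"
proof (induction D)
  case Nil
  then show ?case by (simp add: loglik_def lik_def eln_def)
next
  case (Cons x D)
  then show ?case
    using lik_nonneg[of H f D] by (cases x) (simp add: loglik_def lik_def eln_mult Pr_def)
qed

lemma Nil_in_conf_set:
  assumes "f \<in> F" "0 \<le> \<beta>"
  shows "f \<in> conf_set H F \<beta> []"
proof -
  have "(SUP f\<in>F. loglik H f []) = 0"
    using assms(1) by (auto simp: loglik_def intro!: SUP_const)
  then show ?thesis
    using assms by (simp add: conf_set_def loglik_def)
qed

lemma lik_gt_if_notin_conf_set:
  assumes "fstar \<in> F" "fstar \<notin> conf_set H F \<beta> D" "0 < lik H fstar D"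
  obtains f where "f \<in> F" "exp \<beta> * lik H fstar D < lik H f D"
proof -
  let ?S = "SUP f\<in>F. loglik H f D"
  have "ereal (ln (lik H fstar D)) + ereal \<beta> < ?S"
    using assms by (cases ?S) (auto simp: conf_set_def loglik_eq_eln_lik eln_def)
  then obtain f where f: "f \<in> F" "ereal (ln (lik H fstar D)) + ereal \<beta> < eln (lik H f D)"
    by (auto simp: less_SUP_iff loglik_eq_eln_lik)
  then have "0 < lik H f D" "ln (lik H fstar D) + \<beta> < ln (lik H f D)"
    by (auto simp: eln_def split: if_splits)
  then have "exp \<beta> * lik H fstar D < lik H f D"
    using assms(3) by (metis exp_add exp_less_cancel_iff exp_ln mult.commute)
  with f(1) show ?thesis
    by (rule that)
qed

definition lik_ratio :: "nat \<Rightarrow> (policy \<Rightarrow> hist \<Rightarrow> real) \<Rightarrow> model \<Rightarrow> dataset \<Rightarrow> ennreal" where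
  "lik_ratio H g fstar D = (\<Prod>(\<pi>, \<tau>)\<leftarrow>D. ennreal (g \<pi> \<tau> / Pr H fstar \<pi> \<tau>))"

lemma nn_integral_lik_ratio_crane_run_le:
  assumes G: "upper_envelope Obs Act H F \<epsilon> N G" "i < N" and "0 \<le> \<epsilon>"
    and Obs: "finite Obs" and Act: "finite Act" "Act \<noteq> {}"
    and UA: "\<forall>h. finite (UA h) \<and> (\<forall>u\<in>UA h. set u \<subseteq> Act)"
    and fstar: "valid_model Obs fstar" and sel: "\<forall>D. valid_policy Act (snd (sel D))"
  shows "(\<integral>\<^sup>+Ds. lik_ratio H (G i) fstar (last Ds) \<partial>measure_pmf (crane_run Act UA H fstar sel j))
           \<le> ennreal ((1 + \<epsilon>) ^ (j * explore_count UA H))"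
proof -
  have "(\<integral>\<^sup>+\<tau>. ennreal (G i \<pi> \<tau> / Pr H fstar \<pi> \<tau>) \<partial>measure_pmf (traj fstar \<pi> H)) \<le> ennreal (1 + \<epsilon>)"
    if \<pi>: "valid_policy Act \<pi>" for \<pi>
  proof -
    have "(\<integral>\<^sup>+\<tau>. ennreal (G i \<pi> \<tau> / Pr H fstar \<pi> \<tau>) \<partial>measure_pmf (traj fstar \<pi> H))
        \<le> ennreal (\<Sum>\<tau>\<in>trajs Obs Act H. G i \<pi> \<tau>)"
      unfolding Pr_def using G \<pi>
      by (intro nn_integral_pmf_ratio_le finite_trajs Obs Act set_pmf_traj[OF fstar])
        (auto simp: upper_envelope_def)
    also have "\<dots> \<le> ennreal (1 + \<epsilon>)"
      using G \<pi> by (intro ennreal_leI) (auto simp: upper_envelope_def)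
    finally show ?thesis .
  qed
  then have "(\<integral>\<^sup>+Ds. lik_ratio H (G i) fstar (last Ds) \<partial>measure_pmf (crane_run Act UA H fstar sel j))
      \<le> ennreal (1 + \<epsilon>) ^ (j * explore_count UA H)"
    unfolding lik_ratio_def by (rule nn_integral_crane_run_le[OF sel Act UA])
  also have "\<dots> = ennreal ((1 + \<epsilon>) ^ (j * explore_count UA H))"
    using \<open>0 \<le> \<epsilon>\<close> by (intro ennreal_power) simp
  finally show ?thesis .
qed

lemma lik_ratio_large_if_notin_conf_set:
  assumes G: "upper_envelope Obs Act H F \<epsilon> N G"
    and fstar: "fstar \<in> F" "valid_model Obs fstar"
    and D: "\<forall>(\<pi>, \<tau>)\<in>set D. valid_policy Act \<pi> \<and> \<tau> \<in> set_pmf (traj fstar \<pi> H)"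
    and out: "fstar \<notin> conf_set H F \<beta> D"
  shows "\<exists>i<N. ennreal (exp \<beta>) \<le> lik_ratio H (G i) fstar D"
proof -
  have sample: "valid_policy Act \<pi> \<and> \<tau> \<in> set_pmf (traj fstar \<pi> H)" if "(\<pi>, \<tau>) \<in> set D" for \<pi> \<tau>
    using D that by auto
  then have Pr_pos: "0 < Pr H fstar \<pi> \<tau>" if "(\<pi>, \<tau>) \<in> set D" for \<pi> \<tau>
    using that by (simp add: Pr_def pmf_positive)
  have in_trajs: "\<tau> \<in> trajs Obs Act H" if "(\<pi>, \<tau>) \<in> set D" for \<pi> \<tau>
    using sample[OF that] set_pmf_traj[OF fstar(2)] by blast
  have pos: "0 < lik H fstar D"
    unfolding lik_def using Pr_pos by (intro prod_list_pos) auto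
  obtain f where f: "f \<in> F" "exp \<beta> * lik H fstar D < lik H f D"
    using lik_gt_if_notin_conf_set[OF fstar(1) out pos] .
  obtain i where i: "i < N"
    and G_ge: "\<And>\<pi> \<tau>. valid_policy Act \<pi> \<Longrightarrow> \<tau> \<in> trajs Obs Act H \<Longrightarrow> Pr H f \<pi> \<tau> \<le> G i \<pi> \<tau>"
    using G f(1) unfolding upper_envelope_def by blast
  have "lik H f D \<le> (\<Prod>(\<pi>, \<tau>)\<leftarrow>D. G i \<pi> \<tau>)"
    unfolding lik_def using D in_trajs G_ge by (intro prod_list_mono) (auto simp: Pr_def)
  then have "exp \<beta> < (\<Prod>(\<pi>, \<tau>)\<leftarrow>D. G i \<pi> \<tau>) / lik H fstar D"
    using f(2) pos by (simp add: pos_less_divide_eq)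
  also have "\<dots> = (\<Prod>(\<pi>, \<tau>)\<leftarrow>D. G i \<pi> \<tau> / Pr H fstar \<pi> \<tau>)"
    unfolding lik_def using prod_list_divide[of "case_prod (G i)" "case_prod (Pr H fstar)" D]
    by (simp add: split_def)
  finally have "ennreal (exp \<beta>) \<le> ennreal (\<Prod>(\<pi>, \<tau>)\<leftarrow>D. G i \<pi> \<tau> / Pr H fstar \<pi> \<tau>)"
    by (simp add: ennreal_leI)
  also have "\<dots> = lik_ratio H (G i) fstar D"
  proof -
    have "0 \<le> G i \<pi> \<tau> / Pr H fstar \<pi> \<tau>" if "(\<pi>, \<tau>) \<in> set D" for \<pi> \<tau>
      using G i sample[OF that] in_trajs[OF that] Pr_pos[OF that]
      by (intro divide_nonneg_pos) (auto simp: upper_envelope_def)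
    then show ?thesis
      unfolding lik_ratio_def by (subst ennreal_prod_list) (auto simp: split_def)
  qed
  finally show ?thesis
    using i by blast
qed

lemma prob_notin_conf_set_le:
  assumes br: "has_bracket Obs Act H F \<epsilon> N" and "0 \<le> \<epsilon>"
    and Obs: "finite Obs" and Act: "finite Act" "Act \<noteq> {}"
    and UA: "\<forall>h. finite (UA h) \<and> (\<forall>u\<in>UA h. set u \<subseteq> Act)"
    and fstar: "fstar \<in> F" "valid_model Obs fstar" and sel: "\<forall>D. valid_policy Act (snd (sel D))"
  shows "measure_pmf.prob (crane_run Act UA H fstar sel j) {Ds. fstar \<notin> conf_set H F \<beta> (last Ds)}
           \<le> real N * (1 + \<epsilon>) ^ (j * explore_count UA H) / exp \<beta>"
proof -
  obtain G where G: "upper_envelope Obs Act H F \<epsilon> N G"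
    using has_bracket_imp_upper_envelope[OF br] ..
  let ?M = "crane_run Act UA H fstar sel j"
  let ?bound = "(1 + \<epsilon>) ^ (j * explore_count UA H)"
  let ?large = "\<lambda>i. {Ds. ennreal (exp \<beta>) \<le> lik_ratio H (G i) fstar (last Ds)}"
  have large: "Ds \<in> (\<Union>i<N. ?large i)"
    if Ds: "Ds \<in> set_pmf ?M" and out: "fstar \<notin> conf_set H F \<beta> (last Ds)" for Ds
  proof -
    have "\<forall>(\<pi>, \<tau>)\<in>set (last Ds). valid_policy Act \<pi> \<and> \<tau> \<in> set_pmf (traj fstar \<pi> H)"
      using crane_run_support[OF sel Act UA Ds] by (rule conjunct2)
    then show ?thesis
      using lik_ratio_large_if_notin_conf_set[OF G fstar _ out] by blast
  qed
  have "measure_pmf.prob ?M {Ds. fstar \<notin> conf_set H F \<beta> (last Ds)}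
      = measure_pmf.prob ?M ({Ds. fstar \<notin> conf_set H F \<beta> (last Ds)} \<inter> set_pmf ?M)"
    by (simp add: measure_Int_set_pmf)
  also have "\<dots> \<le> measure_pmf.prob ?M (\<Union>i<N. ?large i)"
    using large by (intro measure_pmf.finite_measure_mono) auto
  also have "\<dots> \<le> (\<Sum>i<N. measure_pmf.prob ?M (?large i))"
    by (intro measure_pmf.finite_measure_subadditive_finite) auto
  also have "\<dots> \<le> (\<Sum>i<N. ?bound / exp \<beta>)"
  proof (rule sum_mono)
    fix i assume "i \<in> {..<N}"
    then have "(\<integral>\<^sup>+Ds. lik_ratio H (G i) fstar (last Ds) \<partial>measure_pmf ?M) \<le> ennreal ?bound"
      by (intro nn_integral_lik_ratio_crane_run_le[OF G _ \<open>0 \<le> \<epsilon>\<close> Obs Act UA fstar(2) sel]) simp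
    then show "measure_pmf.prob ?M (?large i) \<le> ?bound / exp \<beta>"
      using \<open>0 \<le> \<epsilon>\<close> by (intro prob_Markov_pmf) auto
  qed
  also have "\<dots> = real N * ?bound / exp \<beta>"
    by simp
  finally show ?thesis .
qed

lemma confidence_level_bound:
  fixes N K M \<delta> :: real
  assumes "1 \<le> N" "2 \<le> K" "1 \<le> M" "0 < \<delta>" "\<delta> \<le> 1"
  shows "N * exp 1 / exp (4 * ln (N * K * M / \<delta>)) \<le> \<delta> / (2 * K)"
proof -
  define X where "X = N * K * M / \<delta>"
  have X_nonneg: "0 \<le> X"
    unfolding X_def using assms by simp
  have "N * K * 1 \<le> N * K * M"
    using assms by (intro mult_left_mono) auto
  also have "\<dots> = \<delta> * X"
    using assms unfolding X_def by simp
  finally have NK: "N * K \<le> \<delta> * X"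
    by simp
  have "1 * 2 \<le> N * K"
    using assms by (intro mult_mono) auto
  also have "\<dots> \<le> X"
    using NK mult_left_le_one_le[OF X_nonneg] assms by (meson less_imp_le order_trans)
  finally have X: "2 \<le> X"
    by simp
  have exp_\<beta>: "exp (4 * ln X) = X ^ 4"
    using X exp_of_nat_mult[of 4 "ln X"] by simp
  have "2 * K * (N * exp 1) = (N * K) * (2 * exp 1)"
    by (simp add: algebra_simps)
  also have "\<dots> \<le> (N * K) * 8"
    using exp_le assms by (intro mult_left_mono) auto
  also have "\<dots> \<le> (\<delta> * X) * X ^ 3"
    using NK X power_mono[of 2 X 3] assms by (intro mult_mono[of "N * K" "\<delta> * X"]) auto
  also have "\<dots> = \<delta> * X ^ 4"
    by (simp add: power_numeral_reduce)
  finally have "2 * K * (N * exp 1) \<le> \<delta> * X ^ 4" .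
  then show ?thesis
    using assms X unfolding X_def[symmetric] exp_\<beta> by (simp add: field_simps)
qed

lemma prob_notin_conf_set_le_delta:
  fixes \<delta> :: real
  assumes br: "has_bracket Obs Act H F (1 / (real K * real H * real (UA_size UA H))) N"
    and Obs: "finite Obs" and Act: "finite Act" "Act \<noteq> {}"
    and UA: "\<forall>h. finite (UA h) \<and> (\<forall>u\<in>UA h. set u \<subseteq> Act)"
    and fstar: "fstar \<in> F" "valid_model Obs fstar" and sel: "\<forall>D. valid_policy Act (snd (sel D))"
    and \<delta>: "0 < \<delta>" "\<delta> \<le> 1" and "j < K"
  shows "measure_pmf.prob (crane_run Act UA H fstar sel j)
           {Ds. fstar \<notin> conf_set H F (4 * ln (real N * real K * real H * real (UA_size UA H) / \<delta>)) (last Ds)}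
         \<le> \<delta> / (2 * K)"
proof -
  define U where "U = UA_size UA H"
  define m where "m = explore_count UA H"
  define \<beta> where "\<beta> = 4 * ln (real (N * K * (H * U)) / \<delta>)"
  have \<beta>_eq: "4 * ln (real N * real K * real H * real (UA_size UA H) / \<delta>) = \<beta>"
    unfolding \<beta>_def U_def by (simp add: mult.assoc)
  have m_le: "m \<le> H * U"
    unfolding m_def U_def by (rule explore_count_le)
  have N: "1 \<le> N"
    using br fstar(1) unfolding has_bracket_def by fastforce
  show ?thesis
    unfolding \<beta>_eq
  proof (cases "j * m = 0")
    case True
    have "0 \<le> \<beta>"
      unfolding \<beta>_def using ln_of_nat_div_nonneg[OF \<delta>, of "N * K * (H * U)"] by simp
    moreover have "last Ds = []" if "Ds \<in> set_pmf (crane_run Act UA H fstar sel j)" for Ds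
      using crane_run_support[OF sel Act UA that] True unfolding m_def by simp
    ultimately have "set_pmf (crane_run Act UA H fstar sel j) \<inter> {Ds. fstar \<notin> conf_set H F \<beta> (last Ds)} = {}"
      using Nil_in_conf_set[OF fstar(1)] by auto
    then show "measure_pmf.prob (crane_run Act UA H fstar sel j) {Ds. fstar \<notin> conf_set H F \<beta> (last Ds)}
        \<le> \<delta> / (2 * K)"
      using \<delta> by (simp add: measure_pmf_zero_iff[symmetric])
  next
    case False
    then have "0 < j" "0 < m"
      by auto
    then have "1 \<le> H * U" "2 \<le> K"
      using m_le \<open>j < K\<close> by linarith+
    then have HU: "1 \<le> real H * real U"
      by (metis of_nat_1 of_nat_le_iff of_nat_mult)
    have "j * m \<le> K * (H * U)"
      using \<open>j < K\<close> m_le by (intro mult_le_mono) auto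
    then have power_le: "(1 + 1 / (real K * real H * real U)) ^ (j * m) \<le> exp 1"
      using one_plus_inverse_power_le_exp[of "j * m" "K * (H * U)"] by (simp add: mult.assoc)
    have "measure_pmf.prob (crane_run Act UA H fstar sel j) {Ds. fstar \<notin> conf_set H F \<beta> (last Ds)}
        \<le> real N * (1 + 1 / (real K * real H * real U)) ^ (j * m) / exp \<beta>"
      unfolding m_def U_def by (rule prob_notin_conf_set_le[OF br _ Obs Act UA fstar sel]) simp
    also have "\<dots> \<le> real N * exp 1 / exp \<beta>"
      using power_le by (intro divide_right_mono mult_left_mono) auto
    also have "\<dots> \<le> \<delta> / (2 * K)"
      unfolding \<beta>_def using confidence_level_bound[of N K "H * U" \<delta>] N HU \<open>2 \<le> K\<close> \<delta>
      by simp
    finally show "measure_pmf.prob (crane_run Act UA H fstar sel j) {Ds. fstar \<notin> conf_set H F \<beta> (last Ds)}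
        \<le> \<delta> / (2 * K)" .
  qed
qed

lemma prob_fstar_in_all_conf_sets:
  fixes Obs Act :: "nat set" and H K :: nat and UA :: "nat \<Rightarrow> nat list set" and F :: "model set"
    and \<delta> :: real
  defines "\<epsilon>b \<equiv> 1 / (real K * real H * real (UA_size UA H))"
  defines "\<beta> \<equiv> 4 * ln (real (bracket_num Obs Act H F \<epsilon>b) * real K * real H * real (UA_size UA H) / \<delta>)"
  assumes Obs: "finite Obs" and Act: "finite Act" "Act \<noteq> {}"
    and UA: "\<forall>h. finite (UA h) \<and> (\<forall>u\<in>UA h. set u \<subseteq> Act)"
    and fstar: "fstar \<in> F" "valid_model Obs fstar" and sel: "\<forall>D. valid_policy Act (snd (sel D))"
    and \<delta>: "0 < \<delta>" "\<delta> \<le> 1" and br: "\<exists>N. has_bracket Obs Act H F \<epsilon>b N"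
  shows "1 - \<delta> / 2 \<le> measure_pmf.prob (crane_run Act UA H fstar sel K)
           {Ds. \<forall>k\<in>{1..K}. fstar \<in> conf_set H F \<beta> (Ds ! (k - 1))}"
proof -
  have brN: "has_bracket Obs Act H F \<epsilon>b (bracket_num Obs Act H F \<epsilon>b)"
    unfolding bracket_num_def using br by (rule LeastI_ex)
  have "1 - real (card {1..K}) * (\<delta> / (2 * K))
      \<le> measure_pmf.prob (crane_run Act UA H fstar sel K) {Ds. \<forall>k\<in>{1..K}. fstar \<in> conf_set H F \<beta> (Ds ! (k - 1))}"
  proof (rule prob_all_ge_union_bound)
    fix k assume k: "k \<in> {1..K}"
    have "measure_pmf.prob (crane_run Act UA H fstar sel K) {Ds. fstar \<notin> conf_set H F \<beta> (Ds ! (k - 1))}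
        = measure_pmf.prob (crane_run Act UA H fstar sel (k - 1)) {Ds. fstar \<notin> conf_set H F \<beta> (last Ds)}"
      using k by (intro prob_crane_run_nth[where P = "\<lambda>D. fstar \<notin> conf_set H F \<beta> D"]) auto
    also have "\<dots> \<le> \<delta> / (2 * K)"
      unfolding \<beta>_def \<epsilon>b_def using k
      by (intro prob_notin_conf_set_le_delta[OF brN[unfolded \<epsilon>b_def] Obs Act UA fstar sel \<delta>]) auto
    finally show "measure_pmf.prob (crane_run Act UA H fstar sel K)
        {Ds. fstar \<notin> conf_set H F \<beta> (Ds ! (k - 1))} \<le> \<delta> / (2 * K)" .
  qed simp
  moreover have "1 - \<delta> / 2 \<le> 1 - real (card {1..K}) * (\<delta> / (2 * K))"
    using \<delta> by (cases "K = 0") auto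
  ultimately show ?thesis
    by linarith
qed

theorem lemma7:
  "\<exists>c>0. \<forall>(Obs :: nat set) (Act :: nat set) (H :: nat) (K :: nat) (UA :: nat \<Rightarrow> nat list set)
          (r :: nat \<Rightarrow> nat \<Rightarrow> nat \<Rightarrow> real) (F :: model set) (fstar :: model)
          (sel :: dataset \<Rightarrow> model \<times> policy) (\<delta> :: real).
     let \<epsilon>b = 1 / (real K * real H * real (UA_size UA H));
         \<beta> = c * ln (real (bracket_num Obs Act H F \<epsilon>b) * real K * real H
                      * real (UA_size UA H) / \<delta>)
     in
     finite Obs \<and> Obs \<noteq> {} \<and> finite Act \<and> Act \<noteq> {} \<and>
     (\<forall>h. finite (UA h) \<and> (\<forall>u\<in>UA h. set u \<subseteq> Act)) \<and>
     (\<forall>f\<in>F. valid_model Obs f) \<and> fstar \<in> F \<and>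
     0 < \<delta> \<and> \<delta> \<le> 1 \<and>
     (\<exists>N. has_bracket Obs Act H F \<epsilon>b N) \<and>
     (\<forall>D. fst (sel D) \<in> conf_set H F \<beta> D \<and> valid_policy Act (snd (sel D)) \<and>
          (\<forall>f\<in>conf_set H F \<beta> D. \<forall>\<pi>. valid_policy Act \<pi> \<longrightarrow>
              Val H r f \<pi> \<le> Val H r (fst (sel D)) (snd (sel D))))
     \<longrightarrow>
     measure_pmf.prob (crane_run Act UA H fstar sel K)
        {Ds. \<forall>k\<in>{1..K}. fstar \<in> conf_set H F \<beta> (Ds ! (k - 1))} \<ge> 1 - \<delta> / 2"
  unfolding Let_def
  by (intro exI[of _ "4::real"] conjI zero_less_numeral allI impI prob_fstar_in_all_conf_sets) auto

end
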